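(* For every $\lambda\in H$, where $H=\{\lambda\in B_{1/\sqrt2}(0):\ \mathrm{Re}(\lambda)>0,\ \mathrm{Im}(\lambda)>0\}\setminus B_{2/3}(1/3)$, we have $B_{1/2}(0)\subset A_\lambda\{-1,0,1\}$.
   Context: $B_r(z_0)$ is the open disc of radius $r$ centered at $z_0$. For $\lambda\in\mathbb C$ with $|\lambda|<1$, $A_\lambda\{-1,0,1\}=\{\sum_{n\ge0}a_n\lambda^n: a_n\in\{-1,0,1\}\}$, the attractor of the iterated function system $\{\lambda z-1,\lambda z,\lambda z+1\}$. *)

theory Defs
  imports "HOL-Analysis.Analysis"
begin

text \<open>The set of power series sums with digits in {-1,0,1}; the attractor of the IFS
  {lambda z - 1, lambda z, lambda z + 1} for |lambda| < 1.\<close>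
definition attractor_digits :: "complex \<Rightarrow> complex set" where
  "attractor_digits l =
     {z. \<exists>a :: nat \<Rightarrow> int. (\<forall>n. a n \<in> {-1, 0, 1}) \<and> (\<lambda>n. of_int (a n) * l ^ n) sums z}"

definition H_region :: "complex set" where
  "H_region = {l. l \<in> ball 0 (1 / sqrt 2) \<and> Re l > 0 \<and> Im l > 0} - ball (1/3) (2/3)"

end

theory Submission
  imports Defs
begin

text \<open>For \<open>\<lambda> \<in> H\<close> the parallelogram \<open>K = {x + y\<lambda> : |x| \<le> 3/2, |y| \<le> 1/(2|\<lambda>|\<^sup>2)}\<close>
  contains \<open>B\<^sub>1\<^sub>/\<^sub>2(0)\<close> and is covered by its three images \<open>d + \<lambda>K\<close>, \<open>d \<in> {-1,0,1}\<close>.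
  Writing \<open>\<lambda>\<^sup>2 = 2 Re(\<lambda>) \<lambda> - |\<lambda>|\<^sup>2\<close>, a digit \<open>d\<close> with \<open>|x - d| \<le> 1/2\<close> gives
  \<open>x + y\<lambda> = d + \<lambda>(x' + y'\<lambda>)\<close> with \<open>x' + y'\<lambda> \<in> K\<close> again. Iterating this choice
  produces digits \<open>a\<^sub>n\<close> and remainders in the bounded set \<open>K\<close>, so the partial sums of
  \<open>\<Sum> a\<^sub>n \<lambda>\<^sup>n\<close> converge to the starting point.\<close>

lemma subset_attractor_digitsI:
  assumes "norm l < 1" and "bounded K"
    and cover: "\<And>z. z \<in> K \<Longrightarrow> \<exists>d\<in>{-1,0,1}. \<exists>w\<in>K. z = of_int d + l * w"
  shows "K \<subseteq> attractor_digits l"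
proof
  fix z assume "z \<in> K"
  obtain D N where DN: "\<And>w. w \<in> K \<Longrightarrow> D w \<in> {-1,0,1} \<and> N w \<in> K \<and> w = of_int (D w) + l * N w"
    using cover by metis
  obtain M where M: "\<And>w. w \<in> K \<Longrightarrow> norm w \<le> M"
    using \<open>bounded K\<close> by (auto simp: bounded_iff)
  define rem where "rem n = (N ^^ n) z" for n
  define a where "a n = D (rem n)" for n
  have rem_in_K: "rem n \<in> K" for n
    by (induction n) (auto simp: rem_def \<open>z \<in> K\<close> DN)
  have partial_sum: "z = (\<Sum>k<n. of_int (a k) * l ^ k) + l ^ n * rem n" for n
  proof (induction n)
    case 0
    then show ?case by (simp add: rem_def)
  next
    case (Suc n)
    have "rem n = of_int (a n) + l * rem (Suc n)"
      using DN[OF rem_in_K] by (simp add: a_def rem_def)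
    with Suc show ?case by (simp add: algebra_simps)
  qed
  have "(\<lambda>n. l ^ n * rem n) \<longlonglongrightarrow> 0"
  proof (rule Lim_null_comparison)
    show "\<forall>\<^sub>F n in sequentially. norm (l ^ n * rem n) \<le> norm l ^ n * M"
      using M[OF rem_in_K] by (auto simp: norm_mult norm_power intro!: mult_left_mono always_eventually)
    show "(\<lambda>n. norm l ^ n * M) \<longlonglongrightarrow> 0"
      using \<open>norm l < 1\<close> by (intro tendsto_mult_left_zero LIMSEQ_power_zero) auto
  qed
  then have "(\<lambda>n. z - l ^ n * rem n) \<longlonglongrightarrow> z"
    using tendsto_diff[OF tendsto_const] by fastforce
  moreover have "(\<lambda>n. z - l ^ n * rem n) = (\<lambda>n. \<Sum>k<n. of_int (a k) * l ^ k)"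
    using partial_sum by (metis add_diff_cancel_right')
  ultimately have "(\<lambda>n. of_int (a n) * l ^ n) sums z"
    by (simp add: sums_def)
  moreover have "a n \<in> {-1,0,1}" for n
    using DN[OF rem_in_K] by (simp add: a_def)
  ultimately show "z \<in> attractor_digits l"
    unfolding attractor_digits_def by blast
qed

definition parallelogram :: "complex \<Rightarrow> real \<Rightarrow> real \<Rightarrow> complex set" where
  "parallelogram l a b = {of_real x + of_real y * l | x y. \<bar>x\<bar> \<le> a \<and> \<bar>y\<bar> \<le> b}"

lemma bounded_parallelogram: "bounded (parallelogram l a b)"
proof -
  have "norm w \<le> a + b * norm l" if w_in: "w \<in> parallelogram l a b" for w
  proof -
    obtain x y where w: "w = of_real x + of_real y * l" and "\<bar>x\<bar> \<le> a" "\<bar>y\<bar> \<le> b"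
      using w_in unfolding parallelogram_def by blast
    have "norm w \<le> \<bar>x\<bar> + \<bar>y\<bar> * norm l"
      unfolding w by (metis norm_mult norm_of_real norm_triangle_ineq)
    also have "\<dots> \<le> a + b * norm l"
      using \<open>\<bar>x\<bar> \<le> a\<close> \<open>\<bar>y\<bar> \<le> b\<close> by (intro add_mono mult_right_mono) auto
    finally show ?thesis .
  qed
  then show ?thesis
    by (auto simp: bounded_iff)
qed

lemma exists_digit_near:
  fixes x :: real
  assumes "\<bar>x\<bar> \<le> 3/2"
  obtains d :: int where "d \<in> {-1,0,1}" and "\<bar>x - of_int d\<bar> \<le> 1/2"
proof -
  consider "x \<le> -1/2" | "-1/2 < x" "x \<le> 1/2" | "1/2 < x"
    by linarith
  then show ?thesis
  proof cases
    case 1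
    then show ?thesis using assms that[of "-1"] by (auto simp: abs_if)
  next
    case 2
    then show ?thesis using that[of 0] by (auto simp: abs_if)
  next
    case 3
    then show ?thesis using assms that[of 1] by (auto simp: abs_if)
  qed
qed

lemma square_eq_linear:
  fixes l :: complex
  shows "l ^ 2 = 2 * of_real (Re l) * l - of_real ((cmod l)\<^sup>2)"
  unfolding cmod_power2 by (simp add: complex_eq_iff power2_eq_square algebra_simps)

lemma parallelogram_self_covering:
  fixes l :: complex
  defines "r \<equiv> (cmod l)\<^sup>2"
  assumes r: "1/2 + \<bar>Re l\<bar> \<le> 3/2 * r"
    and z: "z \<in> parallelogram l (3/2) (1 / (2 * r))"
  shows "\<exists>d\<in>{-1,0,1}. \<exists>w\<in>parallelogram l (3/2) (1 / (2 * r)). z = of_int d + l * w"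
proof -
  define u where "u = Re l"
  have r0: "r > 0"
    using r by linarith
  obtain x y where z_eq: "z = of_real x + of_real y * l"
    and "\<bar>x\<bar> \<le> 3/2" and y: "\<bar>y\<bar> \<le> 1 / (2 * r)"
    using z by (auto simp: parallelogram_def)
  obtain d :: int where d: "d \<in> {-1,0,1}" and xd: "\<bar>x - d\<bar> \<le> 1/2"
    using exists_digit_near[OF \<open>\<bar>x\<bar> \<le> 3/2\<close>] by blast
  define x' where "x' = y + (2 * u / r) * (x - d)"
  define y' where "y' = - (x - d) / r"
  have "\<bar>y'\<bar> \<le> 1 / (2 * r)"
    unfolding y'_def using xd r0 by (simp add: abs_div field_simps abs_minus_commute)
  moreover have "\<bar>x'\<bar> \<le> 3/2"
  proof -
    have "\<bar>(2 * u / r) * (x - d)\<bar> = (2 * \<bar>u\<bar> / r) * \<bar>x - d\<bar>"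
      using r0 by (simp add: abs_mult)
    also have "\<dots> \<le> (2 * \<bar>u\<bar> / r) * (1/2)"
      using xd r0 by (intro mult_left_mono) auto
    also have "\<dots> = \<bar>u\<bar> / r"
      by simp
    finally have "\<bar>x'\<bar> \<le> 1 / (2 * r) + \<bar>u\<bar> / r"
      unfolding x'_def using y abs_triangle_ineq[of y "(2 * u / r) * (x - d)"] by linarith
    also have "\<dots> = (1/2 + \<bar>u\<bar>) / r"
      using r0 by (simp add: field_simps)
    also have "\<dots> \<le> 3/2"
      using r r0 by (simp add: u_def field_simps)
    finally show ?thesis .
  qed
  ultimately have w: "of_real x' + of_real y' * l \<in> parallelogram l (3/2) (1 / (2 * r))"
    by (auto simp: parallelogram_def)
  have "of_int d + l * (of_real x' + of_real y' * l) = of_int d + of_real x' * l + of_real y' * l ^ 2"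
    by (simp add: power2_eq_square algebra_simps)
  also have "\<dots> = of_int d + of_real x' * l + of_real y' * (2 * of_real u * l - of_real r)"
    by (simp only: square_eq_linear u_def r_def)
  also have "\<dots> = z"
    unfolding z_eq x'_def y'_def using r0 by (simp add: complex_eq_iff field_simps)
  finally show ?thesis
    using d w by metis
qed

lemma ball_subset_parallelogram:
  fixes l :: complex
  assumes "\<bar>Re l\<bar> \<le> \<bar>Im l\<bar>" and "(cmod l)\<^sup>2 \<le> \<bar>Im l\<bar>" and "l \<noteq> 0"
  shows "ball 0 (1/2) \<subseteq> parallelogram l (3/2) (1 / (2 * (cmod l)\<^sup>2))"
proof
  fix z :: complex assume "z \<in> ball 0 (1/2)"
  then have Re_z: "\<bar>Re z\<bar> \<le> 1/2" and Im_z: "\<bar>Im z\<bar> \<le> 1/2"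
    using abs_Re_le_cmod abs_Im_le_cmod by (metis dual_order.trans less_eq_real_def mem_ball_0)+
  have v0: "\<bar>Im l\<bar> > 0"
    using assms by (auto simp: complex_eq_iff)
  define y where "y = Im z / Im l"
  define x where "x = Re z - y * Re l"
  have z_eq: "z = of_real x + of_real y * l"
    unfolding x_def y_def using v0 by (simp add: complex_eq_iff)
  have "\<bar>y\<bar> = \<bar>Im z\<bar> / \<bar>Im l\<bar>"
    by (simp add: y_def abs_div)
  also have "\<dots> \<le> (1/2) / \<bar>Im l\<bar>"
    using Im_z by (rule divide_right_mono) simp
  also have "\<dots> \<le> 1 / (2 * (cmod l)\<^sup>2)"
    using assms(2) v0 \<open>l \<noteq> 0\<close> by (simp add: frac_le)
  finally have "\<bar>y\<bar> \<le> 1 / (2 * (cmod l)\<^sup>2)" .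
  moreover have "\<bar>x\<bar> \<le> 3/2"
  proof -
    have "\<bar>y * Re l\<bar> = \<bar>Im z\<bar> * (\<bar>Re l\<bar> / \<bar>Im l\<bar>)"
      by (simp add: y_def abs_mult abs_div)
    also have "\<dots> \<le> 1/2 * 1"
      using Im_z assms(1) v0 by (intro mult_mono) auto
    finally show ?thesis
      unfolding x_def using Re_z by linarith
  qed
  ultimately show "z \<in> parallelogram l (3/2) (1 / (2 * (cmod l)\<^sup>2))"
    unfolding parallelogram_def z_eq by blast
qed

lemma H_region_bounds:
  assumes "l \<in> H_region"
  shows "cmod l < 1" and "\<bar>Re l\<bar> \<le> \<bar>Im l\<bar>" and "(cmod l)\<^sup>2 \<le> \<bar>Im l\<bar>"
    and "1/2 + \<bar>Re l\<bar> \<le> 3/2 * (cmod l)\<^sup>2"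
proof -
  define u where "u = Re l"
  define v where "v = Im l"
  define r where "r = (cmod l)\<^sup>2"
  have r_eq: "r = u\<^sup>2 + v\<^sup>2"
    by (simp add: r_def u_def v_def cmod_power2)
  have "norm l < 1 / sqrt 2" and "u > 0" and "v > 0" and far: "dist (1/3) l \<ge> 2/3"
    using assms by (auto simp: H_region_def u_def v_def)
  then have "r < (1 / sqrt 2)\<^sup>2"
    unfolding r_def by (intro power_strict_mono) auto
  then have r_lt: "r < 1/2"
    by (simp add: power_divide)
  have "(2/3)\<^sup>2 \<le> (dist (1/3) l)\<^sup>2"
    using far by (intro power_mono) auto
  also have "(dist (1/3) l)\<^sup>2 = (u - 1/3)\<^sup>2 + v\<^sup>2"
    unfolding dist_norm cmod_power2 u_def v_def by (simp add: power2_eq_square algebra_simps)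
  finally have r_ge: "r \<ge> 1/3 + 2 * u / 3"
    unfolding r_eq by (simp add: power2_eq_square algebra_simps)
  have u_lt: "u < 1/4"
    using r_lt r_ge by linarith
  have "u * u \<le> u * (2/3)"
    using \<open>u > 0\<close> u_lt by (intro mult_left_mono) auto
  then have "v\<^sup>2 \<ge> (1/2)\<^sup>2"
    using r_ge unfolding r_eq by (simp add: power2_eq_square)
  then have v_ge: "v \<ge> 1/2"
    using \<open>v > 0\<close> by (simp add: power2_le_iff_abs_le)
  have "(cmod l)\<^sup>2 < 1"
    using r_lt r_def by simp
  then show "cmod l < 1"
    by (simp add: power2_less_1_iff)
  show "\<bar>Re l\<bar> \<le> \<bar>Im l\<bar>" and "(cmod l)\<^sup>2 \<le> \<bar>Im l\<bar>"
    using \<open>u > 0\<close> u_lt v_ge r_lt unfolding u_def v_def r_def by auto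
  show "1/2 + \<bar>Re l\<bar> \<le> 3/2 * (cmod l)\<^sup>2"
    using \<open>u > 0\<close> r_ge unfolding u_def r_def by auto
qed

theorem mainTheorem3:
  assumes "l \<in> H_region"
  shows "ball 0 (1/2) \<subseteq> attractor_digits l"
proof -
  note bounds = H_region_bounds[OF assms]
  have "l \<noteq> 0"
    using bounds(4) by auto
  have "ball 0 (1/2) \<subseteq> parallelogram l (3/2) (1 / (2 * (cmod l)\<^sup>2))"
    using bounds(2,3) \<open>l \<noteq> 0\<close> by (rule ball_subset_parallelogram)
  also have "\<dots> \<subseteq> attractor_digits l"
    using bounds(1) bounded_parallelogram parallelogram_self_covering[OF bounds(4)]
    by (rule subset_attractor_digitsI)
  finally show ?thesis .
qed

end
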